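(* Let $J=JCK(Z,\delta)$. Then $\dim_{\mathbb F}\mathrm{Inder}(J)_{\bar0}=4\dim_{\mathbb F}Z=\dim_{\mathbb F}J_{\bar0}$ (dimensions as cardinals).
   Context: Let $\mathbb F$ be a field of characteristic $\neq 2$, $Z$ a unital commutative associative $\mathbb F$-algebra, and $\delta$ a derivation of $Z$ such that $Z\delta(Z)=Z$ (the $\mathbb F$-span of all products $f\delta(g)$, $f,g\in Z$, is $Z$). The Cheng-Kac Jordan superalgebra $J=JCK(Z,\delta)=J_{\bar0}\oplus J_{\bar1}$ is defined as follows: $J_{\bar0}=Z1\oplus Zw_1\oplus Zw_2\oplus Zw_3$ and $J_{\bar1}=Zx\oplus Zx_1\oplus Zx_2\oplus Zx_3$ are free $Z$-modules of rank 4; $J_{\bar0}$ is the $Z$-algebra $(\mathbb F1\oplus\mathbb Fw_1\oplus\mathbb Fw_2\oplus\mathbb Fw_3)\otimes_{\mathbb F}Z$ with $1$ the identity, $w_1^2=w_2^2=1$, $w_3^2=-1$, $w_iw_j=0$ for $i\ne j$. For $f,g\in Z$ and $i,j\in\{1,2,3\}$ the remaining products are: $f(gx)=(fg)x$, $f(gx_j)=(fg)x_j$, $(fw_i)(gx)=(\delta(f)g)x_i$, $(fw_i)(gx_j)=-(fg)x_{i\times j}$, $(fx)(gx)=\delta(f)g-f\delta(g)$, $(fx)(gx_j)=-(fg)w_j$, $(fx_i)(gx)=(fg)w_i$, $(fx_i)(gx_j)=0$, extended by supercommutativity ($ab=(-1)^{|a||b|}ba$), where $x_{1\times2}=-x_{2\times1}=x_3$,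 $x_{1\times3}=-x_{3\times1}=x_2$, $x_{3\times2}=-x_{2\times3}=x_1$, $x_{i\times i}=0$. $D(a,b)$ is the map $c\mapsto a(bc)-(-1)^{|a||b|}b(ac)$, and $\mathrm{Inder}(J)$ is the span of all $D(a,b)$, $a,b\in J$ homogeneous. *)

theory Defs
  imports Main "HOL.Vector_Spaces" "HOL-Library.Function_Algebras" "HOL-Library.Equipollence"
begin

text \<open>Basis of the Cheng-Kac superalgebra JCK(Z,delta) as a free Z-module:
  J_0 = Z1 + Zw1 + Zw2 + Zw3, J_1 = Zx + Zx1 + Zx2 + Zx3.
  An element of J is the function assigning to each basis vector its Z-coefficient.\<close>

datatype idx = E | W1 | W2 | W3 | X | X1 | X2 | X3

definition allidx :: "idx list" where
  "allidx = [E, W1, W2, W3, X, X1, X2, X3]"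

definition single :: "idx \<Rightarrow> 'z::zero \<Rightarrow> idx \<Rightarrow> 'z" where
  "single c z = (\<lambda>k. if k = c then z else 0)"

text \<open>Product (f e_k)(g e_l) of basis elements with coefficients, following the
  multiplication table (with supercommutativity filled in).  d is the derivation.\<close>

fun bp :: "('z::comm_ring_1 \<Rightarrow> 'z) \<Rightarrow> idx \<Rightarrow> 'z \<Rightarrow> idx \<Rightarrow> 'z \<Rightarrow> idx \<Rightarrow> 'z" where
  "bp d E f l g = single l (f * g)"
| "bp d k f E g = single k (f * g)"
| "bp d W1 f W1 g = single E (f * g)"
| "bp d W2 f W2 g = single E (f * g)"
| "bp d W3 f W3 g = single E (- (f * g))"
| "bp d W1 f X g = single X1 (d f * g)"
| "bp d W2 f X g = single X2 (d f * g)"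
| "bp d W3 f X g = single X3 (d f * g)"
| "bp d X f W1 g = single X1 (d g * f)"
| "bp d X f W2 g = single X2 (d g * f)"
| "bp d X f W3 g = single X3 (d g * f)"
| "bp d W1 f X2 g = single X3 (- (f * g))"
| "bp d W1 f X3 g = single X2 (- (f * g))"
| "bp d W2 f X1 g = single X3 (f * g)"
| "bp d W2 f X3 g = single X1 (f * g)"
| "bp d W3 f X1 g = single X2 (f * g)"
| "bp d W3 f X2 g = single X1 (- (f * g))"
| "bp d X2 f W1 g = single X3 (- (g * f))"
| "bp d X3 f W1 g = single X2 (- (g * f))"
| "bp d X1 f W2 g = single X3 (g * f)"
| "bp d X3 f W2 g = single X1 (g * f)"
| "bp d X1 f W3 g = single X2 (g * f)"
| "bp d X2 f W3 g = single X1 (- (g * f))"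
| "bp d X f X g = single E (d f * g - f * d g)"
| "bp d X f X1 g = single W1 (- (f * g))"
| "bp d X f X2 g = single W2 (- (f * g))"
| "bp d X f X3 g = single W3 (- (f * g))"
| "bp d X1 f X g = single W1 (f * g)"
| "bp d X2 f X g = single W2 (f * g)"
| "bp d X3 f X g = single W3 (f * g)"
| "bp d k f l g = (\<lambda>_. 0)"

definition jmult :: "('z::comm_ring_1 \<Rightarrow> 'z) \<Rightarrow> (idx \<Rightarrow> 'z) \<Rightarrow> (idx \<Rightarrow> 'z) \<Rightarrow> (idx \<Rightarrow> 'z)" where
  "jmult d a b = (\<lambda>c. \<Sum>k\<leftarrow>allidx. \<Sum>l\<leftarrow>allidx. bp d k (a k) l (b l) c)"

definition even_idx :: "idx \<Rightarrow> bool" where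
  "even_idx k \<longleftrightarrow> k \<in> {E, W1, W2, W3}"

definition J0 :: "(idx \<Rightarrow> 'z::zero) set" where
  "J0 = {a. \<forall>k. \<not> even_idx k \<longrightarrow> a k = 0}"

definition J1 :: "(idx \<Rightarrow> 'z::zero) set" where
  "J1 = {a. \<forall>k. even_idx k \<longrightarrow> a k = 0}"

text \<open>Homogeneous of parity p (False = even, True = odd).\<close>
definition hom :: "bool \<Rightarrow> (idx \<Rightarrow> 'z::zero) \<Rightarrow> bool" where
  "hom p a \<longleftrightarrow> (if p then a \<in> J1 else a \<in> J0)"

definition Dmap :: "('z::comm_ring_1 \<Rightarrow> 'z) \<Rightarrow> bool \<Rightarrow> bool \<Rightarrow> (idx \<Rightarrow> 'z) \<Rightarrow> (idx \<Rightarrow> 'z)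
    \<Rightarrow> (idx \<Rightarrow> 'z) \<Rightarrow> (idx \<Rightarrow> 'z)" where
  "Dmap d p q a b = (\<lambda>c k. jmult d a (jmult d b c) k
      - (if p \<and> q then -1 else 1) * jmult d b (jmult d a c) k)"

definition jscale :: "('f \<Rightarrow> 'z \<Rightarrow> 'z) \<Rightarrow> 'f \<Rightarrow> (idx \<Rightarrow> 'z) \<Rightarrow> (idx \<Rightarrow> 'z)" where
  "jscale sc c a = (\<lambda>k. sc c (a k))"

definition mscale :: "('f \<Rightarrow> 'z \<Rightarrow> 'z) \<Rightarrow> 'f \<Rightarrow> ((idx \<Rightarrow> 'z) \<Rightarrow> (idx \<Rightarrow> 'z))
    \<Rightarrow> ((idx \<Rightarrow> 'z) \<Rightarrow> (idx \<Rightarrow> 'z))" where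
  "mscale sc c \<phi> = (\<lambda>a. jscale sc c (\<phi> a))"

definition Inder :: "('f::field \<Rightarrow> 'z::comm_ring_1 \<Rightarrow> 'z) \<Rightarrow> ('z \<Rightarrow> 'z)
    \<Rightarrow> ((idx \<Rightarrow> 'z) \<Rightarrow> (idx \<Rightarrow> 'z)) set" where
  "Inder sc d = module.span (mscale sc) {Dmap d p q a b | p q a b. hom p a \<and> hom q b}"

definition Inder0 :: "('f::field \<Rightarrow> 'z::comm_ring_1 \<Rightarrow> 'z) \<Rightarrow> ('z \<Rightarrow> 'z)
    \<Rightarrow> ((idx \<Rightarrow> 'z) \<Rightarrow> (idx \<Rightarrow> 'z)) set" where
  "Inder0 sc d = Inder sc d \<inter> {\<phi>. \<phi> ` J0 \<subseteq> J0 \<and> \<phi> ` J1 \<subseteq> J1}"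

definition basis_of :: "('f::field \<Rightarrow> 'v::ab_group_add \<Rightarrow> 'v) \<Rightarrow> 'v set \<Rightarrow> 'v set \<Rightarrow> bool" where
  "basis_of sc S B \<longleftrightarrow> \<not> module.dependent sc B \<and> module.span sc B = S"

end

theory Submission
  imports Defs
begin

text \<open>
  For z in J_0 let Phi z be the map
    D(x z_E, x) + D(z_W1 w2, w3) + D(z_W2 w1, w3) + D(z_W3 w1, w2),
  computed in closed form below.  A direct computation with the multiplication
  table shows that D(a,b) equals Phi of a bilinear expression in a, b whenever a, b
  have the same parity, while D(a,b) exchanges J_0 and J_1 when their parities differ.
  Projecting a grading-preserving element of Inder(J) onto its even part therefore
  gives Inder(J)_0 = Phi(J_0).  The map Phi is F-linear, and it is injective on J_0
  because char F <> 2 and Z delta(Z) = Z.  Hence Phi maps an F-basis of J_0 to an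
  F-basis of Inder(J)_0.  Finally J_0 = Z 1 + Z w1 + Z w2 + Z w3 has the F-basis
  {single k c | k in {1,w1,w2,w3}, c in C} for any F-basis C of Z, which is
  equipollent with {0..3} x C; bases of the same space being equipollent, both
  claims follow.
\<close>

section \<open>The product of J in closed form\<close>

definition jprod :: "('z::comm_ring_1 \<Rightarrow> 'z) \<Rightarrow> (idx \<Rightarrow> 'z) \<Rightarrow> (idx \<Rightarrow> 'z) \<Rightarrow> (idx \<Rightarrow> 'z)" where
 "jprod d a b = (\<lambda>k. case k of
   E \<Rightarrow> a E * b E + a W1 * b W1 + a W2 * b W2 - a W3 * b W3 + (d (a X) * b X - a X * d (b X))
 | W1 \<Rightarrow> a E * b W1 + a W1 * b E - a X * b X1 + a X1 * b X
 | W2 \<Rightarrow> a E * b W2 + a W2 * b E - a X * b X2 + a X2 * b X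
 | W3 \<Rightarrow> a E * b W3 + a W3 * b E - a X * b X3 + a X3 * b X
 | X \<Rightarrow> a E * b X + a X * b E
 | X1 \<Rightarrow> a E * b X1 + a X1 * b E + d (a W1) * b X + d (b W1) * a X + a W2 * b X3 - a W3 * b X2 + b W2 * a X3 - b W3 * a X2
 | X2 \<Rightarrow> a E * b X2 + a X2 * b E + d (a W2) * b X + d (b W2) * a X - a W1 * b X3 + a W3 * b X1 - b W1 * a X3 + b W3 * a X1
 | X3 \<Rightarrow> a E * b X3 + a X3 * b E + d (a W3) * b X + d (b W3) * a X - a W1 * b X2 + a W2 * b X1 - b W1 * a X2 + b W2 * a X1)"

lemma jmult_eq_jprod: "jmult d a b = jprod d a b"
proof
  fix k show "jmult d a b k = jprod d a b k"
    by (cases k) (simp_all add: jmult_def jprod_def allidx_def single_def algebra_simps)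
qed

lemma jprod_add_right:
  assumes "\<And>x y. d (x + y) = d x + d y"
  shows "jprod d a (b + b') = jprod d a b + jprod d a b'"
proof
  fix k show "jprod d a (b + b') k = (jprod d a b + jprod d a b') k"
    by (cases k) (simp_all add: jprod_def assms algebra_simps)
qed

section \<open>The grading of J\<close>

lemma J0_iff: "a \<in> J0 \<longleftrightarrow> a X = 0 \<and> a X1 = 0 \<and> a X2 = 0 \<and> a X3 = 0"
proof
  assume "a X = 0 \<and> a X1 = 0 \<and> a X2 = 0 \<and> a X3 = 0"
  then have "a k = 0" if "\<not> even_idx k" for k
    using that by (cases k) (simp_all add: even_idx_def)
  then show "a \<in> J0" by (simp add: J0_def)
qed (simp add: J0_def even_idx_def)

lemma J1_iff: "a \<in> J1 \<longleftrightarrow> a E = 0 \<and> a W1 = 0 \<and> a W2 = 0 \<and> a W3 = 0"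
  unfolding J1_def even_idx_def by auto

lemma hom_both_zero: "hom p a \<Longrightarrow> hom (\<not> p) a \<Longrightarrow> a = 0"
  unfolding hom_def J0_def J1_def fun_eq_iff by (cases p; simp; metis)

lemma hom_add: "hom p a \<Longrightarrow> hom p b \<Longrightarrow> hom p (a + (b :: idx \<Rightarrow> 'z::monoid_add))"
  by (auto simp: hom_def J0_def J1_def)

lemma hom_diff: "hom p a \<Longrightarrow> hom p b \<Longrightarrow> hom p (a - (b :: idx \<Rightarrow> 'z::ab_group_add))"
  by (auto simp: hom_def J0_def J1_def)

lemma hom_const_mult: "hom p a \<Longrightarrow> hom p (\<lambda>k. s * a k :: 'z::comm_ring_1)"
  by (auto simp: hom_def J0_def J1_def)

lemma preserves_grading_iff:
  "(\<phi> ` J0 \<subseteq> J0 \<and> \<phi> ` J1 \<subseteq> J1) \<longleftrightarrow> (\<forall>p c. hom p c \<longrightarrow> hom p (\<phi> c))"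
  by (simp add: hom_def all_bool_eq image_subset_iff) blast

lemma graded_decomposition:
  obtains c0 c1 :: "idx \<Rightarrow> 'z::comm_monoid_add"
  where "c = c0 + c1" "hom False c0" "hom True c1"
proof -
  have "c = (\<lambda>k. if even_idx k then c k else 0) + (\<lambda>k. if even_idx k then 0 else c k)"
    by (simp add: fun_eq_iff)
  moreover have "hom False (\<lambda>k. if even_idx k then c k else 0)"
    and "hom True (\<lambda>k. if even_idx k then 0 else c k)"
    by (simp_all add: hom_def J0_def J1_def)
  ultimately show thesis by (rule that)
qed

lemma jprod_hom:
  assumes "d 0 = 0" "hom p a" "hom q b"
  shows "hom (p \<noteq> q) (jprod d a b)"
  using assms by (cases p; cases q) (simp_all add: hom_def J0_iff J1_iff jprod_def)

lemma Dmap_hom: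
  assumes d0: "d 0 = 0" and "hom p a" "hom q b" "hom r c"
  shows "hom ((p \<noteq> q) \<noteq> r) (Dmap d p q a b c)"
proof -
  have "hom (p \<noteq> (q \<noteq> r)) (jprod d a (jprod d b c))"
    and "hom (q \<noteq> (p \<noteq> r)) (jprod d b (jprod d a c))"
    using jprod_hom[of d p a "q \<noteq> r"] jprod_hom[of d q b r] jprod_hom[of d q b "p \<noteq> r"]
      jprod_hom[of d p a r] assms by simp_all
  moreover have "(p \<noteq> (q \<noteq> r)) = ((p \<noteq> q) \<noteq> r)" "(q \<noteq> (p \<noteq> r)) = ((p \<noteq> q) \<noteq> r)"
    by auto
  ultimately have "hom ((p \<noteq> q) \<noteq> r) (jprod d a (jprod d b c)
      - (\<lambda>k. (if p \<and> q then -1 else 1) * jprod d b (jprod d a c) k))"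
    by (simp add: hom_diff hom_const_mult)
  moreover have "Dmap d p q a b c = jprod d a (jprod d b c)
      - (\<lambda>k. (if p \<and> q then -1 else 1) * jprod d b (jprod d a c) k)"
    by (simp add: Dmap_def jmult_eq_jprod fun_eq_iff)
  ultimately show ?thesis by simp
qed

definition Dgens :: "('z::comm_ring_1 \<Rightarrow> 'z) \<Rightarrow> ((idx \<Rightarrow> 'z) \<Rightarrow> (idx \<Rightarrow> 'z)) set" where
  "Dgens d = {Dmap d p q a b | p q a b. hom p a \<and> hom q b}"

definition odd_maps :: "((idx \<Rightarrow> 'z::ab_group_add) \<Rightarrow> (idx \<Rightarrow> 'z)) set" where
  "odd_maps = {\<phi>. (\<forall>c c'. \<phi> (c + c') = \<phi> c + \<phi> c') \<and> (\<forall>p c. hom p c \<longrightarrow> hom (\<not> p) (\<phi> c))}"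

lemma Dmap_odd_map:
  assumes d: "\<And>x y. d (x + y) = d x + d y" and "hom p a" "hom q b" "p \<noteq> q"
  shows "Dmap d p q a b \<in> odd_maps"
proof -
  have d0: "d 0 = 0" using d[of 0 0] by simp
  have "Dmap d p q a b (c + c') = Dmap d p q a b c + Dmap d p q a b c'" for c c'
    by (simp add: Dmap_def jmult_eq_jprod jprod_add_right[OF d] fun_eq_iff algebra_simps)
  moreover have "hom (\<not> r) (Dmap d p q a b c)" if "hom r c" for r c
    using Dmap_hom[of d p a q b r c] d0 assms(2,3,4) that by simp
  ultimately show ?thesis unfolding odd_maps_def by blast
qed

lemma odd_part_vanishes:
  fixes \<omega> \<psi> :: "(idx \<Rightarrow> 'z::ab_group_add) \<Rightarrow> idx \<Rightarrow> 'z"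
  assumes \<omega>: "\<omega> \<in> odd_maps"
    and \<psi>: "\<And>p c. hom p c \<Longrightarrow> hom p (\<psi> c)"
    and sum: "\<And>p c. hom p c \<Longrightarrow> hom p ((\<psi> + \<omega>) c)"
  shows "\<omega> = 0"
proof
  fix c :: "idx \<Rightarrow> 'z"
  have on_hom: "\<omega> c' = 0" if "hom p c'" for p c'
  proof (rule hom_both_zero)
    have "\<omega> c' = (\<psi> + \<omega>) c' - \<psi> c'" by simp
    then show "hom p (\<omega> c')" using hom_diff sum \<psi> that by metis
    show "hom (\<not> p) (\<omega> c')" using \<omega> that by (simp add: odd_maps_def)
  qed
  obtain c0 c1 where "c = c0 + c1" "hom False c0" "hom True c1"
    by (rule graded_decomposition[of c])
  then show "\<omega> c = 0 c" using \<omega> on_hom by (simp add: odd_maps_def)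
qed

section \<open>Linear algebra of Z-valued functions on the basis symbols\<close>

lemma vector_space_jscale:
  assumes "vector_space scale" shows "vector_space (jscale scale)"
proof -
  interpret vector_space scale by fact
  show ?thesis
    by unfold_locales (simp_all add: jscale_def fun_eq_iff scale_right_distrib scale_left_distrib)
qed

lemma vector_space_mscale:
  assumes "vector_space scale" shows "vector_space (mscale scale)"
proof -
  interpret vector_space scale by fact
  show ?thesis
    by unfold_locales
      (simp_all add: mscale_def jscale_def fun_eq_iff scale_right_distrib scale_left_distrib)
qed

lemma sum_fun_app: "finite t \<Longrightarrow> (sum f t) k = (\<Sum>v\<in>t. f v k)"
  by (induct rule: finite_induct) auto

lemma single_eq_iff:
  assumes "c \<noteq> 0"
  shows "single k c = single k' c' \<longleftrightarrow> k = k' \<and> c = c'"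
proof
  assume "single k c = single k' c'"
  then have "c = (if k = k' then c' else 0)" by (metis single_def)
  then show "k = k' \<and> c = c'" using assms by (auto split: if_splits)
qed simp

lemma sum_single:
  assumes "finite K" "\<And>k. k \<notin> K \<Longrightarrow> a k = 0"
  shows "(\<Sum>k\<in>K. single k (a k)) = a"
proof
  fix x show "(\<Sum>k\<in>K. single k (a k)) x = a x"
    using assms by (simp add: sum_fun_app single_def)
qed

lemma basis_of_supported:
  fixes scale :: "'f::field \<Rightarrow> 'z::comm_ring_1 \<Rightarrow> 'z"
  assumes vs: "vector_space scale" and C: "basis_of scale UNIV C" and K: "finite K"
  defines "B \<equiv> (\<lambda>(k, c). single k c) ` (K \<times> C)"
  shows "basis_of (jscale scale) {a. \<forall>k. k \<notin> K \<longrightarrow> a k = 0} B" and "B \<approx> K \<times> C"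
proof -
  interpret Zs: vector_space scale by (rule vs)
  interpret Js: vector_space "jscale scale" by (rule vector_space_jscale[OF vs])
  let ?S = "{a :: idx \<Rightarrow> 'z. \<forall>k. k \<notin> K \<longrightarrow> a k = 0}"
  have Cind: "Zs.independent C" and Cspan: "Zs.span C = UNIV"
    using C by (auto simp: basis_of_def)
  have C0: "c \<noteq> 0" if "c \<in> C" for c using Cind Zs.dependent_zero that by blast
  have "inj_on (\<lambda>(k, c). single k c) (K \<times> C)"
    by (rule inj_onI) (auto simp: C0 single_eq_iff)
  then show "B \<approx> K \<times> C"
    unfolding B_def by (rule inj_on_image_eqpoll_self)
  have single_span: "single k u \<in> Js.span B" if "k \<in> K" for k u
  proof -
    interpret Sk: module_hom scale "jscale scale" "single k"
      by (simp add: module_hom_iff_linear linear_iff vs vector_space_jscale single_def jscale_def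
          fun_eq_iff Zs.scale_right_distrib)
    have "single k u \<in> single k ` Zs.span C" using Cspan by simp
    also have "\<dots> = Js.span (single k ` C)" by (rule Sk.span_image[symmetric])
    also have "\<dots> \<subseteq> Js.span B" using that by (intro Js.span_mono) (auto simp: B_def)
    finally show ?thesis .
  qed
  have "Js.span B \<subseteq> ?S"
    by (rule Js.span_minimal) (auto simp: B_def single_def Js.subspace_def jscale_def)
  moreover have "?S \<subseteq> Js.span B"
  proof
    fix a assume "a \<in> ?S"
    then have "a = (\<Sum>k\<in>K. single k (a k))" using K by (simp add: sum_single)
    also have "\<dots> \<in> Js.span B" by (intro Js.span_sum single_span)
    finally show "a \<in> Js.span B" .
  qed
  moreover have "Js.independent B"
    unfolding Js.independent_explicit_module
  proof (intro allI impI)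
    fix t u v assume t: "finite t" "t \<subseteq> B" "(\<Sum>v\<in>t. jscale scale (u v) v) = 0" "v \<in> t"
    obtain k c0 where v: "k \<in> K" "c0 \<in> C" "v = single k c0" using t(2,4) unfolding B_def by auto
    define T where "T = {c \<in> C. single k c \<in> t}"
    have inj_k: "inj_on (single k) T"
      using C0 by (intro inj_onI) (auto simp: T_def single_eq_iff)
    have "finite (single k ` T)"
      using t(1) by (rule finite_subset[rotated]) (auto simp: T_def)
    then have "finite T" using inj_k by (rule finite_imageD)
    text \<open>Evaluating the relation at k isolates the coefficients of the elements single k c.\<close>
    have "0 = (\<Sum>w\<in>t. jscale scale (u w) w) k" using t(3) by simp
    also have "\<dots> = (\<Sum>w\<in>t. scale (u w) (w k))" using t(1) by (simp add: sum_fun_app jscale_def)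
    also have "\<dots> = (\<Sum>w\<in>single k ` T. scale (u w) (w k))"
    proof (rule sum.mono_neutral_right[OF t(1)])
      show "single k ` T \<subseteq> t" by (auto simp: T_def)
      show "\<forall>w\<in>t - single k ` T. scale (u w) (w k) = 0"
      proof
        fix w assume w: "w \<in> t - single k ` T"
        then obtain k' c where "k' \<in> K" "c \<in> C" "w = single k' c"
          using t(2) unfolding B_def by auto
        with w have "k' \<noteq> k" by (auto simp: T_def)
        then show "scale (u w) (w k) = 0" using \<open>w = single k' c\<close> by (simp add: single_def)
      qed
    qed
    also have "\<dots> = (\<Sum>c\<in>T. scale (u (single k c)) c)"
      using inj_k by (simp add: sum.reindex) (simp add: single_def)
    finally have "(\<Sum>c\<in>T. scale (u (single k c)) c) = 0" by simp
    moreover have "c0 \<in> T" "T \<subseteq> C" using v t(4) by (auto simp: T_def)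
    ultimately have "u (single k c0) = 0"
      using Cind \<open>finite T\<close> unfolding Zs.independent_explicit_module
      by (elim allE[of _ T] allE[of _ "\<lambda>c. u (single k c)"] allE[of _ c0]) simp
    then show "u v = 0" using v by simp
  qed
  ultimately show "basis_of (jscale scale) ?S B" by (auto simp: basis_of_def)
qed

lemma basis_of_injective_image:
  assumes f: "module_hom s1 s2 f" and B: "basis_of s1 S B" and inj: "inj_on f S"
  shows "basis_of s2 (f ` S) (f ` B)"
proof -
  interpret f: module_hom s1 s2 f by (rule f)
  have ind: "f.m1.independent B" and span: "f.m1.span B = S" using B by (simp_all add: basis_of_def)
  have "f.m2.independent (f ` B)" using f.independent_injective_image[OF ind] inj span by simp
  moreover have "f.m2.span (f ` B) = f ` S" by (simp add: f.span_image span)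
  ultimately show ?thesis by (simp add: basis_of_def)
qed

lemma (in vector_space) basis_of_eqpoll:
  assumes "basis_of scale S B" "basis_of scale S B'"
  shows "B \<approx> B'"
proof -
  have "\<exists>f. bij_betw f B B'"
    using assms by (intro bij_if_span_eq_span_bases) (simp_all add: basis_of_def)
  then show ?thesis by (simp add: eqpoll_def)
qed

section \<open>The even inner derivations of JCK(Z, \<delta>)\<close>

locale cheng_kac =
  fixes scale :: "'f::field \<Rightarrow> 'z::comm_ring_1 \<Rightarrow> 'z" and \<delta> :: "'z \<Rightarrow> 'z"
  assumes char: "(2::'f) \<noteq> 0"
    and vs: "vector_space scale"
    and alg: "\<And>c a b. scale c (a * b) = scale c a * b"
    and lin: "Vector_Spaces.linear scale scale \<delta>"
    and leib: "\<And>a b. \<delta> (a * b) = a * \<delta> b + \<delta> a * b"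
    and gen: "module.span scale {f * \<delta> g | f g. True} = UNIV"
begin

interpretation Zs: vector_space scale by (rule vs)
interpretation Js: vector_space "jscale scale" by (rule vector_space_jscale[OF vs])
interpretation Ms: vector_space "mscale scale" by (rule vector_space_mscale[OF vs])
interpretation der: Vector_Spaces.linear scale scale \<delta> by (rule lin)

declare der.add[simp] der.diff[simp] der.neg[simp] leib[simp]

lemma der_one[simp]: "\<delta> 1 = 0"
  using leib[of 1 1] by simp

text \<open>F-scalars act through the constants scale c 1 of Z, which \<delta> annihilates.\<close>
lemma scale_eq_mult: "scale c x = scale c 1 * x"
  using alg[of c 1 x] by simp

lemma der_scale_one[simp]: "\<delta> (scale c 1) = 0"
  using der.scale[of c 1] by simp

text \<open>Phi z is the inner derivation
  D(x z_E, x) + D(z_W1 w2, w3) + D(z_W2 w1, w3) + D(z_W3 w1, w2), in closed form.\<close>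
definition Phi :: "(idx \<Rightarrow> 'z) \<Rightarrow> (idx \<Rightarrow> 'z) \<Rightarrow> (idx \<Rightarrow> 'z)" where
 "Phi z c = (\<lambda>k. case k of
   E \<Rightarrow> - (2 * z E * \<delta> (c E))
 | W1 \<Rightarrow> - (2 * z E * \<delta> (c W1)) - z W2 * c W3 + z W3 * c W2
 | W2 \<Rightarrow> - (2 * z E * \<delta> (c W2)) - z W1 * c W3 - z W3 * c W1
 | W3 \<Rightarrow> - (2 * z E * \<delta> (c W3)) - z W1 * c W2 - z W2 * c W1
 | X \<Rightarrow> \<delta> (z E) * c X - 2 * z E * \<delta> (c X)
 | X1 \<Rightarrow> - (\<delta> (z E) * c X1) - 2 * z E * \<delta> (c X1) + \<delta> (z W1) * c X - z W2 * c X3 + z W3 * c X2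
 | X2 \<Rightarrow> - (\<delta> (z E) * c X2) - 2 * z E * \<delta> (c X2) - z W1 * c X3 - \<delta> (z W2) * c X - z W3 * c X1
 | X3 \<Rightarrow> - (\<delta> (z E) * c X3) - 2 * z E * \<delta> (c X3) - z W1 * c X2 - z W2 * c X1 - \<delta> (z W3) * c X)"

lemma Phi_as_Dmaps:
  "Phi z = Dmap \<delta> True True (single X (z E)) (single X 1)
         + Dmap \<delta> False False (single W2 (z W1)) (single W3 1)
         + Dmap \<delta> False False (single W1 (z W2)) (single W3 1)
         + Dmap \<delta> False False (single W1 (z W3)) (single W2 1)"
proof (intro ext)
  fix c k show "Phi z c k = (Dmap \<delta> True True (single X (z E)) (single X 1)
         + Dmap \<delta> False False (single W2 (z W1)) (single W3 1)
         + Dmap \<delta> False False (single W1 (z W2)) (single W3 1)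
         + Dmap \<delta> False False (single W1 (z W3)) (single W2 1)) c k"
    by (cases k) (simp_all add: Dmap_def jmult_eq_jprod jprod_def Phi_def single_def algebra_simps)
qed

text \<open>The J_0-coefficients of D(a,b) for a, b both even resp. both odd.\<close>
definition even_coeff :: "(idx \<Rightarrow> 'z) \<Rightarrow> (idx \<Rightarrow> 'z) \<Rightarrow> (idx \<Rightarrow> 'z)" where
 "even_coeff a b = (\<lambda>k. case k of
    W1 \<Rightarrow> a W2 * b W3 - a W3 * b W2
  | W2 \<Rightarrow> a W1 * b W3 - a W3 * b W1
  | W3 \<Rightarrow> a W1 * b W2 - a W2 * b W1
  | _ \<Rightarrow> 0)"

definition odd_coeff :: "(idx \<Rightarrow> 'z) \<Rightarrow> (idx \<Rightarrow> 'z) \<Rightarrow> (idx \<Rightarrow> 'z)" where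
 "odd_coeff a b = (\<lambda>k. case k of
    E \<Rightarrow> a X * b X
  | W1 \<Rightarrow> a X * b X1 + a X1 * b X
  | W2 \<Rightarrow> - (a X * b X2 + a X2 * b X)
  | W3 \<Rightarrow> - (a X * b X3 + a X3 * b X)
  | _ \<Rightarrow> 0)"

lemma Dmap_even_even:
  assumes "a \<in> J0" "b \<in> J0"
  shows "Dmap \<delta> False False a b = Phi (even_coeff a b)" and "even_coeff a b \<in> J0"
proof -
  show "Dmap \<delta> False False a b = Phi (even_coeff a b)"
  proof (intro ext)
    fix c k show "Dmap \<delta> False False a b c k = Phi (even_coeff a b) c k"
      using assms unfolding J0_iff
      by (cases k) (simp_all add: Dmap_def jmult_eq_jprod jprod_def Phi_def even_coeff_def algebra_simps)
  qed
qed (simp add: J0_iff even_coeff_def)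

lemma Dmap_odd_odd:
  assumes "a \<in> J1" "b \<in> J1"
  shows "Dmap \<delta> True True a b = Phi (odd_coeff a b)" and "odd_coeff a b \<in> J0"
proof -
  show "Dmap \<delta> True True a b = Phi (odd_coeff a b)"
  proof (intro ext)
    fix c k show "Dmap \<delta> True True a b c k = Phi (odd_coeff a b) c k"
      using assms unfolding J1_iff
      by (cases k) (simp_all add: Dmap_def jmult_eq_jprod jprod_def Phi_def odd_coeff_def algebra_simps)
  qed
qed (simp add: J0_iff odd_coeff_def)

lemma Phi_preserves_grading: "hom p c \<Longrightarrow> hom p (Phi z c)"
  by (cases p) (simp_all add: hom_def J0_iff J1_iff Phi_def)

lemma Phi_linear: "module_hom (jscale scale) (mscale scale) Phi"
proof -
  have "Phi (z + z') = Phi z + Phi z'" for z z'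
  proof (intro ext)
    fix c k show "Phi (z + z') c k = (Phi z + Phi z') c k"
      by (cases k) (simp_all add: Phi_def algebra_simps)
  qed
  moreover have "Phi (jscale scale s z) = mscale scale s (Phi z)" for s z
  proof (intro ext)
    fix c k
    have "jscale scale s z = (\<lambda>k. scale s 1 * z k)"
      and "mscale scale s (Phi z) c = (\<lambda>k. scale s 1 * Phi z c k)"
      unfolding jscale_def mscale_def by (rule ext, rule scale_eq_mult)+
    then show "Phi (jscale scale s z) c k = mscale scale s (Phi z) c k"
      by (cases k) (simp_all add: Phi_def algebra_simps)
  qed
  ultimately show ?thesis
    by (simp add: module_hom_iff_linear linear_iff vector_space_jscale vector_space_mscale vs)
qed

interpretation Ph: module_hom "jscale scale" "mscale scale" Phi by (rule Phi_linear)

text \<open>Z has no 2-torsion, since 2 is invertible in F.\<close>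
lemma two_torsion_free: assumes "2 * (w::'z) = 0" shows "w = 0"
proof -
  have "scale 2 w = 2 * w"
    by (metis mult_2 one_add_one Zs.scale_left_distrib Zs.scale_one)
  with assms char show ?thesis by simp
qed

lemma annihilator_of_image_zero: assumes "\<And>h. u * \<delta> h = 0" shows "u = 0"
proof -
  have "Zs.subspace {w. u * w = 0}"
    unfolding Zs.subspace_def
  proof (intro conjI ballI allI)
    fix c x assume "x \<in> {w. u * w = 0}"
    moreover have "u * scale c x = scale c 1 * (u * x)"
      by (subst scale_eq_mult) (simp add: ac_simps)
    ultimately show "scale c x \<in> {w. u * w = 0}" by simp
  qed (simp_all add: distrib_left)
  moreover have "{f * \<delta> g | f g. True} \<subseteq> {w. u * w = 0}"
  proof clarify
    fix f g
    have "u * (f * \<delta> g) = f * (u * \<delta> g)" by (simp add: ac_simps)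
    then show "u * (f * \<delta> g) = 0" using assms by simp
  qed
  ultimately have "Zs.span {f * \<delta> g | f g. True} \<subseteq> {w. u * w = 0}"
    by (intro Zs.span_minimal)
  with gen have "u * 1 = 0" by blast
  then show ?thesis by simp
qed

lemma J0_subspace: "Js.subspace J0"
  unfolding Js.subspace_def by (auto simp: J0_iff jscale_def)

text \<open>Phi is injective on J_0: the W-coordinates of z are read off from Phi z applied to
  w1, w2, while Phi z (f 1) = -2 z_E \<delta>(f) forces z_E = 0.\<close>

lemma Phi_injective: "inj_on Phi J0"
proof -
  have "z = 0" if z: "z \<in> J0" "Phi z = 0" for z
  proof -
    have e: "Phi z c k = 0" for c k using z(2) by simp
    have "z W3 = 0" using e[of "single W2 1" W1] by (simp add: Phi_def single_def)
    moreover have "z W2 = 0" using e[of "single W1 1" W3] by (simp add: Phi_def single_def)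
    moreover have "z W1 = 0" using e[of "single W2 1" W3] by (simp add: Phi_def single_def)
    moreover have "2 * (z E * \<delta> h) = 0" for h
      using e[of "single E h" E] by (simp add: Phi_def single_def algebra_simps)
    then have "z E = 0" using two_torsion_free annihilator_of_image_zero by blast
    ultimately have "z k = 0" for k using z(1) unfolding J0_iff by (cases k) simp_all
    then show "z = 0" by (simp add: fun_eq_iff)
  qed
  then show ?thesis by (simp add: Ph.inj_on_iff_eq_0[OF J0_subspace])
qed

lemma Dgens_split: "Dgens \<delta> \<subseteq> Phi ` J0 \<union> odd_maps"
proof
  fix g assume "g \<in> Dgens \<delta>"
  then obtain p q a b where g: "g = Dmap \<delta> p q a b" "hom p a" "hom q b"
    by (auto simp: Dgens_def)
  show "g \<in> Phi ` J0 \<union> odd_maps"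
  proof (cases "p = q")
    case True
    then show ?thesis
      using g Dmap_even_even Dmap_odd_odd by (cases p) (auto simp: hom_def)
  next
    case False
    then show ?thesis using g Dmap_odd_map[OF der.add] by blast
  qed
qed

text \<open>The odd maps form an F-subspace, so the span of the generators splits as a sum.\<close>
lemma odd_maps_subspace: "Ms.subspace odd_maps"
proof -
  have scale_hom: "hom p (\<lambda>k. scale s (a k))" if "hom p a" for p s a
    using that by (auto simp: hom_def J0_def J1_def jscale_def)
  have zero_hom: "hom p (0 :: idx \<Rightarrow> 'z)" for p by (simp add: hom_def J0_def J1_def)
  show ?thesis
    unfolding Ms.subspace_def odd_maps_def mem_Collect_eq
    by (simp add: zero_hom hom_add scale_hom mscale_def jscale_def Zs.scale_right_distrib fun_eq_iff)
qed

lemma Phi_in_Inder0: "Phi z \<in> Inder0 scale \<delta>"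
proof -
  have "hom True (single X u)" "hom False (single W1 u)" "hom False (single W2 u)"
    "hom False (single W3 u)" for u
    by (auto simp: hom_def J0_iff J1_iff single_def)
  then have "Phi z \<in> Ms.span (Dgens \<delta>)"
    unfolding Phi_as_Dmaps Dgens_def by (intro Ms.span_add Ms.span_base) blast+
  then show ?thesis
    using Phi_preserves_grading preserves_grading_iff[of "Phi z"]
    by (simp add: Inder0_def Inder_def Dgens_def)
qed

lemma Inder0_eq: "Inder0 scale \<delta> = Phi ` J0"
proof
  show "Phi ` J0 \<subseteq> Inder0 scale \<delta>" using Phi_in_Inder0 by blast
  show "Inder0 scale \<delta> \<subseteq> Phi ` J0"
  proof
    fix \<phi> assume "\<phi> \<in> Inder0 scale \<delta>"
    then have \<phi>: "\<phi> \<in> Ms.span (Dgens \<delta>)" "\<And>p c. hom p c \<Longrightarrow> hom p (\<phi> c)"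
      by (auto simp: Inder0_def Inder_def Dgens_def preserves_grading_iff)
    have "Ms.span (Dgens \<delta>) \<subseteq> Ms.span (Phi ` J0 \<union> odd_maps)"
      by (rule Ms.span_mono[OF Dgens_split])
    also have "\<dots> = {x + y | x y. x \<in> Phi ` J0 \<and> y \<in> odd_maps}"
      using Ms.span_Un[of "Phi ` J0" odd_maps] Ph.subspace_image[OF J0_subspace]
        odd_maps_subspace
      by (simp add: Ms.span_eq_iff[THEN iffD2])
    finally obtain z \<omega> where \<phi>_eq: "\<phi> = Phi z + \<omega>" "z \<in> J0" and \<omega>: "\<omega> \<in> odd_maps"
      using \<phi>(1) by blast
    have "\<omega> = 0"
    proof (rule odd_part_vanishes[OF \<omega>])
      show "hom p (Phi z c)" if "hom p c" for p c using that by (rule Phi_preserves_grading)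
      show "hom p ((Phi z + \<omega>) c)" if "hom p c" for p c using \<phi>(2)[OF that] \<phi>_eq(1) by simp
    qed
    then show "\<phi> \<in> Phi ` J0" using \<phi>_eq by simp
  qed
qed

lemma J0_basis:
  assumes "basis_of scale UNIV C"
  obtains D where "basis_of (jscale scale) J0 D" "D \<approx> {..<4::nat} \<times> C"
proof -
  let ?K = "{E, W1, W2, W3}"
  have J0_eq: "J0 = {a. \<forall>k. k \<notin> ?K \<longrightarrow> a k = 0}"
    by (auto simp: J0_def even_idx_def)
  let ?D = "(\<lambda>(k, c). single k c) ` (?K \<times> C)"
  have "basis_of (jscale scale) J0 ?D" "?D \<approx> ?K \<times> C"
    using basis_of_supported[OF vs assms, of ?K] by (simp_all add: J0_eq)
  moreover have "?K \<times> C \<approx> {..<4::nat} \<times> C"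
    by (intro times_eqpoll_cong eqpoll_refl) (simp add: eqpoll_iff_finite_card)
  ultimately show thesis using that eqpoll_trans by blast
qed

lemma J0_dimension:
  assumes "basis_of (jscale scale) J0 D" "basis_of scale UNIV C"
  shows "D \<approx> {..<4::nat} \<times> C"
proof -
  obtain D' where "basis_of (jscale scale) J0 D'" "D' \<approx> {..<4::nat} \<times> C"
    using J0_basis[OF assms(2)] .
  then show ?thesis using Js.basis_of_eqpoll[OF assms(1)] eqpoll_trans by blast
qed

lemma Inder0_dimension:
  assumes "basis_of (mscale scale) (Inder0 scale \<delta>) B" "basis_of scale UNIV C"
  shows "B \<approx> {..<4::nat} \<times> C"
proof -
  obtain D where D: "basis_of (jscale scale) J0 D" "D \<approx> {..<4::nat} \<times> C"
    using J0_basis[OF assms(2)] .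
  have "basis_of (mscale scale) (Inder0 scale \<delta>) (Phi ` D)"
    unfolding Inder0_eq by (rule basis_of_injective_image[OF Phi_linear D(1) Phi_injective])
  then have "B \<approx> Phi ` D" by (rule Ms.basis_of_eqpoll[OF assms(1)])
  also have "D \<subseteq> J0" using D(1) Js.span_superset by (auto simp: basis_of_def)
  then have "Phi ` D \<approx> D"
    by (intro inj_on_image_eqpoll_self inj_on_subset[OF Phi_injective])
  also note D(2)
  finally show ?thesis .
qed

end

theorem corollary4p2:
  fixes scale :: "'f::field \<Rightarrow> 'z::comm_ring_1 \<Rightarrow> 'z" and \<delta> :: "'z \<Rightarrow> 'z"
  assumes char: "(2::'f) \<noteq> 0"
    and vs: "vector_space scale"
    and alg: "\<And>c a b. scale c (a * b) = scale c a * b"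
    and lin: "Vector_Spaces.linear scale scale \<delta>"
    and leib: "\<And>a b. \<delta> (a * b) = a * \<delta> b + \<delta> a * b"
    and gen: "module.span scale {f * \<delta> g | f g. True} = UNIV"
  shows "(\<forall>B C. basis_of (mscale scale) (Inder0 scale \<delta>) B \<and> basis_of scale UNIV C
            \<longrightarrow> B \<approx> {..<4::nat} \<times> C)
       \<and> (\<forall>D C. basis_of (jscale scale) J0 D \<and> basis_of scale UNIV C
            \<longrightarrow> D \<approx> {..<4::nat} \<times> C)"
proof -
  interpret cheng_kac scale \<delta> using assms by (simp add: cheng_kac_def)
  show ?thesis using Inder0_dimension J0_dimension by blast
qed

end
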